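(* There exists an integer $\mathsf{N}\ge 1$ such that $SAW_2(\mathsf{N})\neq SAW_3(\mathsf{N})$; that is, there is a path without crossing $c\in(\mathbb{Z}/4\mathbb{Z})^{\mathsf{N}}$ that cannot be reached from $(0,0,\dots,0)$ by a finite sequence of pivot moves all of whose intermediate conformations are paths without crossing.
   Context: A conformation of $\mathsf{N}+1$ residues is a vector $C=(C_1,\dots,C_{\mathsf{N}})\in(\mathbb{Z}/4\mathbb{Z})^{\mathsf{N}}$ (absolute encoding: $0$ = east, $1$ = south, $2$ = west, $3$ = north). Its lattice representation is $p(C)=(X_0,\dots,X_{\mathsf{N}})$ with $X_0=(0,0)$ and $X_{i}=X_{i-1}+(1,0),(0,-1),(-1,0),(0,1)$ according as $C_i=0,1,2,3$. $C$ is a path without crossing if the points $X_0,\dots,X_{\mathsf{N}}$ are pairwise distinct. $SAW_1(\mathsf{N})$ is the set of paths without crossing in $(\mathbb{Z}/4\mathbb{Z})^{\mathsf{N}}$. Let $f(x)=x+1 \pmod 4$. For $k\in\{-\mathsf{N},\dots,\mathsf{N}\}$ the pivot move $f_k$ is the identity if $k=0$, and otherwise $f_k(C_1,\dots,C_{\mathsf{N}})=(C_1,\dots,C_{|k|-1},f^{\operatorname{sign}(k)}(C_{|k|}),\dots,f^{\operatorname{sign}(k)}(C_{\mathsf{N}}))$. $SAW_2(\mathsf{N})$ is the set of $c\in SAW_1(\mathsf{N})$ for which there is a finite sequence $k_1,\dots,k_n\in\{-\mathsf{N},\dots,\mathsf{N}\}$ with $c=f_{k_n}\circ\cdots\circ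 f_{k_1}(0,\dots,0)$. $SAW_3(\mathsf{N})$ is the set of $c\in SAW_1(\mathsf{N})$ for which there is such a sequence with, in addition, every intermediate conformation $f_{k_j}\circ\cdots\circ f_{k_1}(0,\dots,0)$, $1\le j\le n$, lying in $SAW_1(\mathsf{N})$. *)

theory Defs
  imports Main
begin

text \<open>A conformation of N+1 residues is a list of length N with entries in
  {0,1,2,3}, representing Z/4Z (absolute encoding: 0 east, 1 south, 2 west, 3 north).\<close>

definition conformations :: "nat \<Rightarrow> nat list set" where
  "conformations N = {C. length C = N \<and> set C \<subseteq> {0..<4}}"

fun dstep :: "nat \<Rightarrow> int \<times> int" where
  "dstep d = (if d = 0 then (1, 0) else if d = 1 then (0, -1)
              else if d = 2 then (-1, 0) else (0, 1))"

fun lattice_from :: "int \<times> int \<Rightarrow> nat list \<Rightarrow> (int \<times> int) list" where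
  "lattice_from p [] = [p]"
| "lattice_from p (c # cs) =
     p # lattice_from (fst p + fst (dstep c), snd p + snd (dstep c)) cs"

definition lattice_rep :: "nat list \<Rightarrow> (int \<times> int) list" where
  "lattice_rep C = lattice_from (0, 0) C"

definition SAW1 :: "nat \<Rightarrow> nat list set" where
  "SAW1 N = {C \<in> conformations N. distinct (lattice_rep C)}"

definition pivot :: "int \<Rightarrow> nat list \<Rightarrow> nat list" where
  "pivot k C = (if k = 0 then C else
     map (\<lambda>(i, x). if nat \<bar>k\<bar> \<le> i then (if k > 0 then (x + 1) mod 4 else (x + 3) mod 4) else x)
         (zip [1..<length C + 1] C))"

definition apply_pivots :: "int list \<Rightarrow> nat list \<Rightarrow> nat list" where
  "apply_pivots ks C = foldl (\<lambda>D k. pivot k D) C ks"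

definition SAW2 :: "nat \<Rightarrow> nat list set" where
  "SAW2 N = {c \<in> SAW1 N. \<exists>ks. (\<forall>k \<in> set ks. \<bar>k\<bar> \<le> int N)
                  \<and> c = apply_pivots ks (replicate N 0)}"

definition SAW3 :: "nat \<Rightarrow> nat list set" where
  "SAW3 N = {c \<in> SAW1 N. \<exists>ks. (\<forall>k \<in> set ks. \<bar>k\<bar> \<le> int N)
                  \<and> c = apply_pivots ks (replicate N 0)
                  \<and> (\<forall>j. 1 \<le> j \<and> j \<le> length ks \<longrightarrow>
                         apply_pivots (take j ks) (replicate N 0) \<in> SAW1 N)}"

end

theory Submission
  imports Defs "HOL-Library.Product_Plus"
begin

text \<open>
  The witness is a frozen walk of 227 steps: every pivot \<open>f\<^sub>k\<close> with \<open>2 \<le> \<bar>k\<bar>\<close> creates a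
  self-intersection, which is certified by an explicit pair of colliding points for each \<open>k\<close>.
  The moves \<open>f\<^sub>1\<close> and \<open>f\<^sub>-\<^sub>1\<close> just rotate the whole walk. Since pivot moves are
  invertible, a path from the straight walk to the frozen one through self-avoiding walks can
  be followed backwards, and it never leaves the four rotations of the frozen walk; but the
  straight walk is not one of them. Without the self-avoidance constraint, on the other hand,
  every conformation is reachable: fix the first direction by global rotations after building
  the rest with pivots at indices \<open>\<ge> 2\<close>.
\<close>

text \<open>Adding \<open>m\<close> to a direction turns it by \<open>m\<close> clockwise quarter turns; accordingly \<open>rot\<close>
  below rotates lattice points clockwise.\<close>

definition turn :: "nat \<Rightarrow> nat \<Rightarrow> nat" where
  "turn m d = (d + m) mod 4"

definition rotate_conf :: "nat \<Rightarrow> nat list \<Rightarrow> nat list" where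
  "rotate_conf m C = map (turn m) C"

definition pivot_turns :: "int \<Rightarrow> nat" where
  "pivot_turns k = (if 0 < k then 1 else 3)"

lemma turn_less_4 [simp]: "turn m d < 4"
  by (simp add: turn_def)

lemma turn_turn: "turn m (turn m' d) = turn (m + m') d"
  by (simp add: turn_def mod_simps ac_simps)

lemma turn_0: "d < 4 \<Longrightarrow> turn 0 d = d"
  by (simp add: turn_def)

lemma turn_4: "d < 4 \<Longrightarrow> turn 4 d = d"
  by (simp add: turn_def)

lemma length_rotate_conf [simp]: "length (rotate_conf m C) = length C"
  by (simp add: rotate_conf_def)

lemma set_rotate_conf: "set (rotate_conf m C) \<subseteq> {0..<4}"
  by (auto simp: rotate_conf_def)

lemma rotate_conf_rotate_conf: "rotate_conf m (rotate_conf m' C) = rotate_conf (m + m') C"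
  by (simp add: rotate_conf_def turn_turn)

lemma rotate_conf_0: "set C \<subseteq> {0..<4} \<Longrightarrow> rotate_conf 0 C = C"
  by (auto simp: rotate_conf_def turn_0 intro!: map_idI)

lemma rotate_conf_4: "set C \<subseteq> {0..<4} \<Longrightarrow> rotate_conf 4 C = C"
  by (auto simp: rotate_conf_def turn_4 intro!: map_idI)

lemma length_pivot [simp]: "length (pivot k C) = length C"
  by (cases "length C") (auto simp: pivot_def)

lemma pivot_nth:
  "i < length C \<Longrightarrow> pivot k C ! i =
     (if k \<noteq> 0 \<and> nat \<bar>k\<bar> \<le> Suc i then turn (pivot_turns k) (C ! i) else C ! i)"
  by (simp add: pivot_def nth_zip turn_def pivot_turns_def del: upt_Suc)

lemma pivot_eq_take_drop:
  assumes "k \<noteq> 0"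
  shows "pivot k C = take (nat \<bar>k\<bar> - 1) C @ map (turn (pivot_turns k)) (drop (nat \<bar>k\<bar> - 1) C)"
proof -
  define n where "n = nat \<bar>k\<bar> - 1"
  have nth_eq: "pivot k C ! i = (take n C @ map (turn (pivot_turns k)) (drop n C)) ! i"
    if i: "i < length C" for i
  proof (cases "i < n")
    case True
    then show ?thesis using i by (auto simp: pivot_nth nth_append n_def)
  next
    case False
    then have "map (turn (pivot_turns k)) (drop n C) ! (i - n) = turn (pivot_turns k) (C ! i)"
      using i by simp
    then show ?thesis using False i assms by (auto simp: pivot_nth nth_append n_def)
  qed
  show ?thesis
    unfolding n_def[symmetric] by (rule nth_equalityI) (simp_all add: nth_eq)
qed

lemma pivot_one: "pivot 1 C = rotate_conf 1 C"
  and pivot_minus_one: "pivot (- 1) C = rotate_conf 3 C"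
  by (simp_all add: pivot_eq_take_drop rotate_conf_def pivot_turns_def)

lemma set_pivot: "set C \<subseteq> {0..<4} \<Longrightarrow> set (pivot k C) \<subseteq> {0..<4}"
  by (force simp: in_set_conv_nth pivot_nth)

lemma pivot_uminus_pivot:
  assumes "set C \<subseteq> {0..<4}"
  shows "pivot (- k) (pivot k C) = C"
proof (rule nth_equalityI)
  fix i assume "i < length (pivot (- k) (pivot k C))"
  then have i: "i < length C" by simp
  then have "C ! i < 4" using assms nth_mem by fastforce
  moreover have "k \<noteq> 0 \<Longrightarrow> pivot_turns (- k) + pivot_turns k = 4"
    by (simp add: pivot_turns_def)
  ultimately show "pivot (- k) (pivot k C) ! i = C ! i"
    using i by (auto simp: pivot_nth turn_turn turn_4)
qed simp

lemma pivot_rotate_conf: "pivot k (rotate_conf m C) = rotate_conf m (pivot k C)"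
  by (rule nth_equalityI) (simp_all add: pivot_nth rotate_conf_def turn_turn add.commute)

fun rot :: "nat \<Rightarrow> int \<times> int \<Rightarrow> int \<times> int" where
  "rot 0 v = v"
| "rot (Suc m) v = (snd (rot m v), - fst (rot m v))"

definition rot_about :: "int \<times> int \<Rightarrow> nat \<Rightarrow> int \<times> int \<Rightarrow> int \<times> int" where
  "rot_about e m v = e + rot m (v - e)"

lemma rot_add: "rot m (u + v) = rot m u + rot m v"
  by (induction m) simp_all

lemma rot_zero [simp]: "rot m 0 = 0"
  by (induction m) (simp_all add: zero_prod_def)

lemma inj_rot: "inj (rot m)"
proof (induction m)
  case (Suc m)
  show ?case
  proof (rule injI)
    fix u v assume "rot (Suc m) u = rot (Suc m) v"
    then have "rot m u = rot m v" by (simp add: prod_eq_iff)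
    then show "u = v" using Suc by (simp add: inj_eq)
  qed
qed simp

lemma rot_1 [simp]: "rot 1 (a, b) = (b, - a)"
  and rot_3 [simp]: "rot 3 (a, b) = (- b, a)"
  by (simp_all add: numeral_3_eq_3)

lemma dstep_turn: "d < 4 \<Longrightarrow> dstep (turn m d) = rot m (dstep d)"
proof (induction m)
  case 0
  then show ?case by (simp add: turn_0)
next
  case (Suc m)
  have "dstep (turn 1 d') = rot 1 (dstep d')" if "d' < 4" for d'
  proof -
    have "d' = 0 \<or> d' = 1 \<or> d' = 2 \<or> d' = 3"
      using that by auto
    then show ?thesis
      by (elim disjE) (simp_all add: turn_def)
  qed
  then have "dstep (turn (Suc m) d) = rot 1 (rot m (dstep d))"
    using Suc by (metis turn_turn turn_less_4 plus_1_eq_Suc)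
  then show ?case
    by (simp add: case_prod_beta)
qed

lemma lattice_from_Cons: "lattice_from p (c # cs) = p # lattice_from (p + dstep c) cs"
  by (simp add: plus_prod_def)

declare lattice_from.simps(2) [simp del] dstep.simps [simp del]

lemma lattice_from_not_Nil [simp]: "lattice_from p C \<noteq> []"
  by (cases C) (auto simp: lattice_from_Cons)

lemma nth0_lattice_from [simp]: "lattice_from p C ! 0 = p"
  by (cases C) (auto simp: lattice_from_Cons)

lemma lattice_rep_eq: "lattice_rep C = lattice_from 0 C"
  by (simp add: lattice_rep_def zero_prod_def)

lemma length_lattice_from [simp]: "length (lattice_from p C) = Suc (length C)"
  by (induction C arbitrary: p) (auto simp: lattice_from_Cons)

lemma lattice_from_append:
  "lattice_from p (xs @ ys) = butlast (lattice_from p xs) @ lattice_from (last (lattice_from p xs)) ys"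
  by (induction xs arbitrary: p) (auto simp: lattice_from_Cons)

lemma lattice_from_translate: "lattice_from (p + q) C = map (\<lambda>x. x + q) (lattice_from p C)"
proof (induction C arbitrary: p)
  case (Cons c C)
  have "lattice_from (p + q + dstep c) C = lattice_from ((p + dstep c) + q) C"
    by (simp add: ac_simps)
  also have "\<dots> = map (\<lambda>x. x + q) (lattice_from (p + dstep c) C)"
    by (rule Cons.IH)
  finally show ?case
    by (simp add: lattice_from_Cons)
qed simp

lemma lattice_from_turn:
  "set C \<subseteq> {0..<4} \<Longrightarrow> lattice_from (rot m p) (map (turn m) C) = map (rot m) (lattice_from p C)"
proof (induction C arbitrary: p)
  case (Cons c C)
  then have "rot m p + dstep (turn m c) = rot m (p + dstep c)"
    by (simp add: dstep_turn rot_add)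
  then show ?case
    using Cons by (simp add: lattice_from_Cons)
qed simp

lemma lattice_from_turn_about:
  assumes "set C \<subseteq> {0..<4}"
  shows "lattice_from e (map (turn m) C) = map (rot_about e m) (lattice_from e C)"
proof -
  have "lattice_from e X = map (\<lambda>x. x + e) (lattice_from 0 X)" for X
    using lattice_from_translate[of 0 e X] by simp
  moreover have "lattice_from 0 (map (turn m) C) = map (rot m) (lattice_from 0 C)"
    using lattice_from_turn[OF assms, of m 0] by simp
  moreover have "rot_about e m (x + e) = rot m x + e" for x
    by (simp add: rot_about_def add.commute)
  ultimately show ?thesis by simp
qed

lemma lattice_rep_rotate_conf:
  "set C \<subseteq> {0..<4} \<Longrightarrow> lattice_rep (rotate_conf m C) = map (rot m) (lattice_rep C)"
  using lattice_from_turn[of C m 0] by (simp add: lattice_rep_eq rotate_conf_def)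

lemma distinct_lattice_rep_rotate_conf:
  "set C \<subseteq> {0..<4} \<Longrightarrow> distinct (lattice_rep (rotate_conf m C)) \<longleftrightarrow> distinct (lattice_rep C)"
  by (simp add: lattice_rep_rotate_conf distinct_map inj_on_subset[OF inj_rot])

lemma lattice_rep_pivot:
  assumes "k \<noteq> 0" "nat \<bar>k\<bar> \<le> length C" "set C \<subseteq> {0..<4}"
  defines "n \<equiv> nat \<bar>k\<bar> - 1" and "L \<equiv> lattice_rep C"
  shows "lattice_rep (pivot k C) = take n L @ map (rot_about (L ! n) (pivot_turns k)) (drop n L)"
proof -
  define P where "P = lattice_from 0 (take n C)"
  have L: "L = butlast P @ lattice_from (last P) (drop n C)"
    unfolding L_def lattice_rep_eq P_def by (subst lattice_from_append[symmetric]) simp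
  have "length (butlast P) = n"
    using assms by (simp add: P_def n_def)
  then have L_parts: "take n L = butlast P" "drop n L = lattice_from (last P) (drop n C)" "L ! n = last P"
    by (simp_all add: L nth_append)
  have "set (drop n C) \<subseteq> {0..<4}"
    using assms(3) set_drop_subset by fastforce
  have "lattice_rep (pivot k C) = lattice_from 0 (take n C @ map (turn (pivot_turns k)) (drop n C))"
    by (simp only: lattice_rep_eq pivot_eq_take_drop[OF assms(1)] n_def)
  also have "\<dots> = butlast P @ lattice_from (last P) (map (turn (pivot_turns k)) (drop n C))"
    by (simp only: lattice_from_append P_def)
  also have "\<dots> = butlast P @ map (rot_about (last P) (pivot_turns k)) (lattice_from (last P) (drop n C))"
    using \<open>set (drop n C) \<subseteq> {0..<4}\<close> by (simp only: lattice_from_turn_about)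
  also have "\<dots> = take n L @ map (rot_about (L ! n) (pivot_turns k)) (drop n L)"
    by (simp only: L_parts)
  finally show ?thesis .
qed

lemma not_distinct_take_map_drop:
  assumes "i < n" "n \<le> j" "j < length L" "L ! i = f (L ! j)"
  shows "\<not> distinct (take n L @ map f (drop n L))"
proof
  let ?M = "take n L @ map f (drop n L)"
  assume "distinct ?M"
  moreover have "?M ! i = ?M ! j" "i < length ?M" "j < length ?M"
    using assms by (simp_all add: nth_append)
  ultimately show False
    using assms(1,2) by (simp add: nth_eq_iff_index_eq)
qed

text \<open>The pivot at index \<open>n\<close> turning by \<open>m\<close> quarter turns keeps the points \<open>X\<^sub>0, \<dots>, X\<^sub>n\<^sub>-\<^sub>2\<close>
  and rotates the others about \<open>X\<^sub>n\<^sub>-\<^sub>1\<close>; \<open>(i, j)\<close> witnesses that \<open>X\<^sub>j\<close> lands on \<open>X\<^sub>i\<close>.\<close>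

definition pivot_collision :: "(int \<times> int) list \<Rightarrow> nat \<Rightarrow> nat \<Rightarrow> nat \<Rightarrow> nat \<Rightarrow> bool" where
  "pivot_collision L n m i j \<longleftrightarrow>
     i < n - 1 \<and> n - 1 \<le> j \<and> j < length L \<and> L ! i = rot_about (L ! (n - 1)) m (L ! j)"

lemma pivot_collision_not_distinct:
  assumes "k \<noteq> 0" "nat \<bar>k\<bar> \<le> length C" "set C \<subseteq> {0..<4}"
    and "pivot_collision (lattice_rep C) (nat \<bar>k\<bar>) (pivot_turns k) i j"
  shows "\<not> distinct (lattice_rep (pivot k C))"
  using assms(4) unfolding lattice_rep_pivot[OF assms(1-3)] pivot_collision_def
  by (elim conjE) (rule not_distinct_take_map_drop)

fun pivot_collisions :: "(int \<times> int) list \<Rightarrow> nat \<Rightarrow> nat \<Rightarrow> (nat \<times> nat) list \<Rightarrow> bool" where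
  "pivot_collisions L m n [] \<longleftrightarrow> True"
| "pivot_collisions L m n ((i, j) # ws) \<longleftrightarrow> pivot_collision L n m i j \<and> pivot_collisions L m (Suc n) ws"

lemma pivot_collisions_nth:
  "pivot_collisions L m n ws \<Longrightarrow> t < length ws \<Longrightarrow> \<exists>i j. pivot_collision L (n + t) m i j"
proof (induction L m n ws arbitrary: t rule: pivot_collisions.induct)
  case (2 L m n i j ws)
  then show ?case
    by (cases t) auto
qed simp

definition frozen :: "nat \<Rightarrow> nat list \<Rightarrow> bool" where
  "frozen N c \<longleftrightarrow> (\<forall>k. 2 \<le> \<bar>k\<bar> \<and> \<bar>k\<bar> \<le> int N \<longrightarrow> \<not> distinct (lattice_rep (pivot k c)))"

lemma frozen_rotate_conf:
  assumes "frozen N c" "set c \<subseteq> {0..<4}"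
  shows "frozen N (rotate_conf m c)"
  using assms set_pivot[OF assms(2)]
  by (simp add: frozen_def pivot_rotate_conf distinct_lattice_rep_rotate_conf)

lemma pivot_preimage_rotate_conf:
  assumes "frozen N c" "set c \<subseteq> {0..<4}" "\<bar>k\<bar> \<le> int N"
    and "D \<in> SAW1 N" "pivot k D = rotate_conf m c"
  shows "\<exists>m'. D = rotate_conf m' c"
proof -
  have "set D \<subseteq> {0..<4}" and D_saw: "distinct (lattice_rep D)"
    using assms(4) by (simp_all add: SAW1_def conformations_def)
  then have D: "D = pivot (- k) (rotate_conf m c)"
    using assms(5) pivot_uminus_pivot by metis
  consider "k = 0" | "k = 1" | "k = - 1" | "2 \<le> \<bar>k\<bar>"
    by linarith
  then show ?thesis
  proof cases
    case 1
    then show ?thesis using D by (auto simp: pivot_def)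
  next
    case 2
    then show ?thesis using D by (auto simp: pivot_minus_one rotate_conf_rotate_conf)
  next
    case 3
    then show ?thesis using D by (auto simp: pivot_one rotate_conf_rotate_conf)
  next
    case 4
    then have "\<not> distinct (lattice_rep D)"
      using D frozen_rotate_conf[OF assms(1,2)] assms(3) by (simp add: frozen_def)
    then show ?thesis using D_saw by contradiction
  qed
qed

lemma apply_pivots_snoc: "apply_pivots (ks @ [k]) C = pivot k (apply_pivots ks C)"
  by (simp add: apply_pivots_def)

lemma rotate_conf_orbit_backward:
  assumes "frozen N c" "set c \<subseteq> {0..<4}" "\<forall>k \<in> set ks. \<bar>k\<bar> \<le> int N" "z \<in> SAW1 N"
    and "\<forall>j. 1 \<le> j \<and> j \<le> length ks \<longrightarrow> apply_pivots (take j ks) z \<in> SAW1 N"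
    and "apply_pivots ks z = rotate_conf m c"
  shows "\<exists>m'. z = rotate_conf m' c"
  using assms(3-6)
proof (induction ks arbitrary: m rule: rev_induct)
  case Nil
  then show ?case by (auto simp: apply_pivots_def)
next
  case (snoc k ks)
  have "apply_pivots ks z \<in> SAW1 N"
  proof (cases "ks = []")
    case True
    then show ?thesis using snoc.prems(2) by (simp add: apply_pivots_def)
  next
    case False
    then show ?thesis using snoc.prems(3)[rule_format, of "length ks"] by (simp add: Suc_le_eq)
  qed
  moreover have "\<bar>k\<bar> \<le> int N" "pivot k (apply_pivots ks z) = rotate_conf m c"
    using snoc.prems(1,4) by (simp_all add: apply_pivots_snoc)
  ultimately obtain m' where "apply_pivots ks z = rotate_conf m' c"
    using pivot_preimage_rotate_conf[OF assms(1,2)] by blast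
  moreover have "\<forall>j. 1 \<le> j \<and> j \<le> length ks \<longrightarrow> apply_pivots (take j ks) z \<in> SAW1 N"
    using snoc.prems(3) by auto
  ultimately show ?case
    using snoc.IH snoc.prems(1,2) by simp
qed

lemma replicate_0_in_SAW1: "replicate N 0 \<in> SAW1 N"
proof -
  have east: "\<forall>q \<in> set (lattice_from p (replicate n 0)). fst p \<le> fst q" for p n
    by (induction n arbitrary: p) (fastforce simp: lattice_from_Cons dstep.simps)+
  have "distinct (lattice_from p (replicate n 0))" for p n
  proof (induction n arbitrary: p)
    case (Suc n)
    have "p \<notin> set (lattice_from (p + (1, 0)) (replicate n 0))"
      using east[of "p + (1, 0)" n] by fastforce
    then show ?case
      using Suc by (simp add: lattice_from_Cons dstep.simps)
  qed simp
  then show ?thesis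
    by (auto simp: SAW1_def conformations_def lattice_rep_def)
qed

lemma frozen_not_in_SAW3:
  assumes "frozen N c" "set c \<subseteq> {0..<4}" "\<forall>m. rotate_conf m c \<noteq> replicate N 0"
  shows "c \<notin> SAW3 N"
proof
  assume "c \<in> SAW3 N"
  then obtain ks where "\<forall>k \<in> set ks. \<bar>k\<bar> \<le> int N" "apply_pivots ks (replicate N 0) = rotate_conf 0 c"
    "\<forall>j. 1 \<le> j \<and> j \<le> length ks \<longrightarrow> apply_pivots (take j ks) (replicate N 0) \<in> SAW1 N"
    using rotate_conf_0[OF assms(2)] by (auto simp: SAW3_def)
  then show False
    using rotate_conf_orbit_backward[OF assms(1,2) _ replicate_0_in_SAW1] assms(3) by metis
qed

lemma apply_pivots_append: "apply_pivots (ks @ ks') C = apply_pivots ks' (apply_pivots ks C)"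
  by (simp add: apply_pivots_def)

lemma pivot_Cons:
  assumes "0 < k"
  shows "pivot (k + 1) (y # D) = y # pivot k D"
proof -
  define n where "n = nat k - 1"
  have nonzero: "k \<noteq> 0" "k + 1 \<noteq> 0"
    using assms by simp_all
  have index: "nat \<bar>k + 1\<bar> - 1 = Suc n" "nat \<bar>k\<bar> - 1 = n"
    using assms by (auto simp: n_def)
  have "pivot_turns (k + 1) = pivot_turns k"
    using assms by (simp add: pivot_turns_def)
  then show ?thesis
    unfolding pivot_eq_take_drop[OF nonzero(1)] pivot_eq_take_drop[OF nonzero(2)] index by simp
qed

lemma apply_pivots_Cons:
  "\<forall>k \<in> set ks. 0 < k \<Longrightarrow> apply_pivots (map (\<lambda>k. k + 1) ks) (y # D) = y # apply_pivots ks D"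
  by (induction ks rule: rev_induct) (simp_all add: apply_pivots_def pivot_Cons)

lemma apply_pivots_replicate_1:
  "set D \<subseteq> {0..<4} \<Longrightarrow> apply_pivots (replicate m 1) D = rotate_conf m D"
proof (induction m)
  case 0
  then show ?case by (simp add: apply_pivots_def rotate_conf_0)
next
  case (Suc m)
  have "apply_pivots (replicate (Suc m) 1) D = pivot 1 (apply_pivots (replicate m 1) D)"
    by (metis apply_pivots_snoc replicate_Suc replicate_append_same)
  then show ?case
    using Suc by (simp add: pivot_one rotate_conf_rotate_conf)
qed

lemma conformation_reachable:
  "set C \<subseteq> {0..<4} \<Longrightarrow>
     \<exists>ks. (\<forall>k \<in> set ks. 1 \<le> k \<and> k \<le> int (length C)) \<and> apply_pivots ks (replicate (length C) 0) = C"
proof (induction "length C" arbitrary: C)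
  case 0
  then show ?case by (intro exI[of _ "[]"]) (simp add: apply_pivots_def)
next
  case (Suc n)
  then obtain x C' where C: "C = x # C'" and x: "x < 4" and C': "set C' \<subseteq> {0..<4}"
    by (cases C) auto
  obtain ks where ks: "\<forall>k \<in> set ks. 1 \<le> k \<and> k \<le> int n"
    and ks_reach: "apply_pivots ks (replicate n 0) = rotate_conf (4 - x) C'"
    using Suc.hyps(1)[of "rotate_conf (4 - x) C'"] Suc.hyps(2) C set_rotate_conf by auto
  define ks' where "ks' = map (\<lambda>k. k + 1) ks @ replicate x 1"
  have "\<forall>k \<in> set ks. 0 < k"
    using ks by auto
  then have "apply_pivots ks' (replicate (length C) 0)
      = apply_pivots (replicate x 1) (0 # rotate_conf (4 - x) C')"
    using ks_reach Suc.hyps(2) C by (simp add: ks'_def apply_pivots_append apply_pivots_Cons)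
  also have "\<dots> = rotate_conf x (0 # rotate_conf (4 - x) C')"
    using set_rotate_conf by (intro apply_pivots_replicate_1) auto
  also have "\<dots> = turn x 0 # rotate_conf x (rotate_conf (4 - x) C')"
    by (simp add: rotate_conf_def)
  also have "\<dots> = C"
    using x C' C by (simp only: rotate_conf_rotate_conf) (simp add: rotate_conf_4 turn_def)
  finally have "apply_pivots ks' (replicate (length C) 0) = C" .
  moreover have "\<forall>k \<in> set ks'. 1 \<le> k \<and> k \<le> int (length C)"
  proof
    fix k assume "k \<in> set ks'"
    then consider k' where "k' \<in> set ks" "k = k' + 1" | "k = 1"
      by (auto simp: ks'_def)
    then show "1 \<le> k \<and> k \<le> int (length C)"
      by cases (use ks Suc.hyps(2) in force)+
  qed
  ultimately show ?case
    by blast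
qed

lemma SAW2_eq_SAW1: "SAW2 N = SAW1 N"
proof
  show "SAW1 N \<subseteq> SAW2 N"
  proof
    fix C assume C: "C \<in> SAW1 N"
    then have "length C = N" "set C \<subseteq> {0..<4}"
      by (auto simp: SAW1_def conformations_def)
    then show "C \<in> SAW2 N"
      using C conformation_reachable[of C] by (fastforce simp: SAW2_def)
  qed
qed (auto simp: SAW2_def)


definition frozen_walk :: "nat list" where
  "frozen_walk =
    [0, 3, 2, 2, 2, 1, 1, 1, 0, 0, 0, 0, 0, 3, 3, 3, 3, 3, 2, 2, 2, 2, 2, 2, 2, 1, 1, 1, 1, 1, 1,
     1, 0, 0, 0, 0, 0, 0, 0, 0, 0, 0, 0, 3, 3, 2, 1, 2, 3, 3, 3, 3, 3, 3, 3, 3, 2, 2, 2, 2, 2, 3,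
     2, 2, 2, 2, 1, 2, 2, 1, 1, 1, 1, 1, 2, 2, 1, 1, 1, 0, 0, 1, 1, 1, 0, 0, 0, 0, 1, 0, 0, 0, 0,
     0, 1, 1, 2, 2, 2, 2, 3, 2, 2, 3, 2, 2, 2, 2, 3, 3, 3, 2, 2, 3, 3, 3, 3, 3, 0, 0, 3, 3, 3, 3,
     3, 0, 0, 3, 0, 0, 0, 0, 0, 0, 0, 0, 1, 0, 0, 0, 1, 1, 1, 1, 1, 1, 1, 0, 3, 3, 0, 1, 1, 1, 1,
     1, 1, 2, 2, 2, 2, 2, 2, 2, 2, 1, 2, 3, 2, 2, 2, 2, 3, 3, 3, 2, 2, 3, 0, 0, 3, 3, 3, 3, 3, 0,
     0, 3, 0, 1, 0, 0, 0, 0, 0, 0, 1, 1, 1, 1, 1, 1, 1, 2, 2, 2, 2, 2, 2, 2, 3, 3, 3, 3, 3, 0, 0,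
     0, 0, 0, 1, 1, 1, 2, 2, 2, 3]"

definition frozen_walk_points :: "(int \<times> int) list" where
  "frozen_walk_points =
    [(0, 0), (1, 0), (1, 1), (0, 1), (-1, 1), (-2, 1), (-2, 0), (-2, -1), (-2, -2), (-1, -2),
     (0, -2), (1, -2), (2, -2), (3, -2), (3, -1), (3, 0), (3, 1), (3, 2), (3, 3), (2, 3), (1, 3),
     (0, 3), (-1, 3), (-2, 3), (-3, 3), (-4, 3), (-4, 2), (-4, 1), (-4, 0), (-4, -1), (-4, -2),
     (-4, -3), (-4, -4), (-3, -4), (-2, -4), (-1, -4), (0, -4), (1, -4), (2, -4), (3, -4),
     (4, -4), (5, -4), (6, -4), (7, -4), (7, -3), (7, -2), (6, -2), (6, -3), (5, -3), (5, -2),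
     (5, -1), (5, 0), (5, 1), (5, 2), (5, 3), (5, 4), (5, 5), (4, 5), (3, 5), (2, 5), (1, 5),
     (0, 5), (0, 6), (-1, 6), (-2, 6), (-3, 6), (-4, 6), (-4, 5), (-5, 5), (-6, 5), (-6, 4),
     (-6, 3), (-6, 2), (-6, 1), (-6, 0), (-7, 0), (-8, 0), (-8, -1), (-8, -2), (-8, -3),
     (-7, -3), (-6, -3), (-6, -4), (-6, -5), (-6, -6), (-5, -6), (-4, -6), (-3, -6), (-2, -6),
     (-2, -7), (-1, -7), (0, -7), (1, -7), (2, -7), (3, -7), (3, -8), (3, -9), (2, -9), (1, -9),
     (0, -9), (-1, -9), (-1, -8), (-2, -8), (-3, -8), (-3, -7), (-4, -7), (-5, -7), (-6, -7),
     (-7, -7), (-7, -6), (-7, -5), (-7, -4), (-8, -4), (-9, -4), (-9, -3), (-9, -2), (-9, -1),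
     (-9, 0), (-9, 1), (-8, 1), (-7, 1), (-7, 2), (-7, 3), (-7, 4), (-7, 5), (-7, 6), (-6, 6),
     (-5, 6), (-5, 7), (-4, 7), (-3, 7), (-2, 7), (-1, 7), (0, 7), (1, 7), (2, 7), (3, 7),
     (3, 6), (4, 6), (5, 6), (6, 6), (6, 5), (6, 4), (6, 3), (6, 2), (6, 1), (6, 0), (6, -1),
     (7, -1), (7, 0), (7, 1), (8, 1), (8, 0), (8, -1), (8, -2), (8, -3), (8, -4), (8, -5),
     (7, -5), (6, -5), (5, -5), (4, -5), (3, -5), (2, -5), (1, -5), (0, -5), (0, -6), (-1, -6),
     (-1, -5), (-2, -5), (-3, -5), (-4, -5), (-5, -5), (-5, -4), (-5, -3), (-5, -2), (-6, -2),
     (-7, -2), (-7, -1), (-6, -1), (-5, -1), (-5, 0), (-5, 1), (-5, 2), (-5, 3), (-5, 4),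
     (-4, 4), (-3, 4), (-3, 5), (-2, 5), (-2, 4), (-1, 4), (0, 4), (1, 4), (2, 4), (3, 4),
     (4, 4), (4, 3), (4, 2), (4, 1), (4, 0), (4, -1), (4, -2), (4, -3), (3, -3), (2, -3),
     (1, -3), (0, -3), (-1, -3), (-2, -3), (-3, -3), (-3, -2), (-3, -1), (-3, 0), (-3, 1),
     (-3, 2), (-2, 2), (-1, 2), (0, 2), (1, 2), (2, 2), (2, 1), (2, 0), (2, -1), (1, -1),
     (0, -1), (-1, -1), (-1, 0)]"

text \<open>Entry \<open>t\<close> of each table is a collision for the pivot at index \<open>t + 2\<close>.\<close>

definition frozen_walk_collisions_cw :: "(nat \<times> nat) list" where
  "frozen_walk_collisions_cw =
    [(0, 224), (1, 221), (2, 218), (1, 21), (0, 22), (1, 23), (2, 26), (1, 27), (2, 28), (5, 33),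
     (4, 34), (3, 35), (2, 36), (3, 37), (4, 38), (5, 39), (8, 44), (7, 45), (6, 50), (7, 51),
     (8, 52), (11, 57), (10, 58), (9, 59), (8, 60), (9, 61), (11, 63), (12, 64), (13, 65),
     (13, 67), (14, 70), (13, 71), (14, 72), (15, 73), (16, 74), (20, 80), (19, 81), (21, 85),
     (20, 86), (19, 87), (18, 88), (18, 90), (15, 95), (18, 92), (19, 93), (20, 92), (46, 48),
     (47, 49), (46, 50), (22, 92), (23, 93), (24, 94), (52, 144), (53, 143), (54, 142),
     (55, 141), (56, 138), (56, 136), (57, 135), (58, 134), (60, 62), (60, 134), (62, 132),
     (63, 131), (64, 130), (65, 129), (66, 68), (66, 126), (68, 126), (69, 123), (70, 122),
     (71, 121), (70, 118), (73, 75), (72, 118), (75, 119), (76, 116), (77, 115), (78, 114),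
     (79, 111), (80, 82), (79, 109), (82, 110), (83, 109), (84, 106), (85, 105), (85, 103),
     (87, 89), (87, 103), (89, 101), (89, 99), (90, 98), (91, 97), (93, 95), (93, 97), (95, 97),
     (93, 99), (92, 100), (92, 102), (99, 101), (90, 102), (89, 103), (102, 104), (87, 105),
     (86, 106), (85, 107), (84, 108), (107, 109), (84, 110), (83, 111), (80, 112), (79, 113),
     (112, 114), (79, 115), (78, 116), (77, 117), (76, 118), (117, 119), (76, 120), (73, 121),
     (72, 122), (71, 123), (70, 124), (69, 125), (124, 126), (69, 127), (66, 128), (127, 129),
     (66, 130), (65, 131), (64, 132), (63, 133), (62, 134), (60, 136), (60, 138), (135, 137),
     (58, 138), (57, 139), (56, 140), (139, 141), (56, 142), (55, 143), (54, 144), (53, 145),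
     (52, 146), (51, 147), (46, 148), (45, 153), (148, 152), (149, 151), (150, 152), (149, 153),
     (148, 154), (45, 155), (44, 156), (43, 157), (156, 158), (43, 159), (42, 160), (41, 161),
     (40, 162), (39, 163), (38, 164), (37, 165), (35, 167), (165, 167), (166, 168), (35, 169),
     (34, 170), (33, 171), (32, 172), (171, 173), (32, 174), (31, 175), (28, 178), (175, 179),
     (176, 178), (177, 179), (176, 180), (29, 181), (28, 182), (27, 183), (26, 184), (25, 185),
     (184, 186), (25, 187), (23, 189), (187, 189), (188, 190), (23, 191), (22, 192), (21, 193),
     (20, 194), (19, 195), (18, 196), (195, 197), (18, 198), (17, 199), (16, 200), (15, 201),
     (14, 202), (13, 203), (202, 204), (13, 205), (12, 206), (11, 207), (10, 208), (9, 209),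
     (8, 210), (209, 211), (8, 212), (7, 213), (6, 214), (5, 215), (214, 216), (5, 217),
     (4, 218), (3, 219), (2, 220), (219, 221), (2, 222), (1, 223), (222, 224), (1, 225),
     (0, 226), (225, 227)]"

definition frozen_walk_collisions_ccw :: "(nat \<times> nat) list" where
  "frozen_walk_collisions_ccw =
    [(0, 2), (1, 3), (0, 4), (0, 6), (4, 6), (0, 8), (4, 10), (7, 9), (4, 12), (0, 12), (1, 13),
     (7, 17), (12, 14), (9, 19), (1, 17), (2, 18), (12, 22), (17, 19), (12, 24), (2, 22),
     (3, 23), (4, 24), (5, 25), (17, 31), (24, 26), (19, 33), (5, 29), (6, 30), (7, 31), (8, 32),
     (24, 38), (31, 33), (24, 40), (8, 36), (9, 37), (10, 38), (11, 39), (12, 40), (13, 41),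
     (14, 44), (13, 45), (40, 46), (42, 44), (42, 46), (44, 46), (45, 47), (42, 48), (33, 57),
     (13, 51), (14, 52), (15, 53), (16, 54), (17, 55), (18, 56), (14, 62), (55, 57), (16, 62),
     (18, 60), (19, 61), (21, 63), (22, 64), (61, 63), (22, 66), (22, 68), (23, 69), (65, 67),
     (25, 69), (21, 75), (68, 70), (23, 75), (25, 73), (26, 74), (29, 77), (30, 78), (29, 79),
     (75, 77), (74, 80), (75, 81), (78, 80), (30, 84), (31, 83), (32, 84), (29, 89), (83, 85),
     (31, 89), (32, 88), (34, 90), (35, 91), (88, 90), (35, 93), (36, 94), (78, 144), (79, 143),
     (82, 144), (83, 145), (84, 146), (83, 147), (80, 148), (79, 147), (76, 154), (100, 102),
     (72, 156), (71, 157), (103, 105), (69, 157), (75, 163), (76, 164), (76, 166), (75, 167),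
     (72, 166), (110, 112), (70, 166), (76, 172), (69, 167), (69, 169), (68, 170), (66, 170),
     (65, 171), (64, 170), (119, 121), (62, 170), (60, 172), (62, 174), (62, 176), (62, 178),
     (59, 177), (126, 128), (57, 177), (56, 176), (54, 178), (55, 181), (54, 182), (53, 183),
     (52, 184), (51, 185), (52, 188), (136, 138), (44, 184), (43, 185), (44, 188), (43, 187),
     (41, 189), (41, 191), (94, 188), (144, 150), (145, 149), (146, 148), (147, 149), (146, 150),
     (96, 188), (41, 195), (40, 196), (96, 192), (97, 193), (98, 194), (99, 195), (100, 196),
     (102, 196), (103, 195), (105, 195), (106, 194), (94, 164), (93, 165), (93, 167), (164, 166),
     (91, 167), (88, 168), (167, 169), (88, 170), (87, 171), (86, 172), (83, 173), (82, 174),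
     (81, 175), (174, 176), (81, 177), (78, 178), (75, 179), (74, 180), (179, 181), (74, 182),
     (73, 183), (72, 184), (71, 185), (68, 186), (67, 187), (186, 188), (65, 189), (63, 191),
     (189, 191), (63, 193), (61, 193), (60, 194), (59, 195), (58, 196), (55, 197), (54, 198),
     (53, 199), (52, 200), (51, 201), (50, 202), (49, 203), (40, 204), (39, 205), (38, 206),
     (37, 207), (36, 208), (35, 209), (34, 210), (31, 211), (30, 212), (29, 213), (28, 214),
     (27, 215), (24, 216), (23, 217), (22, 218), (21, 219), (20, 220), (17, 221), (16, 222),
     (15, 223), (12, 224), (11, 225), (10, 226), (7, 227)]"

lemma length_frozen_walk: "length frozen_walk = 227"
  by (simp add: frozen_walk_def)

lemma set_frozen_walk: "set frozen_walk \<subseteq> {0..<4}"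
  by (simp add: frozen_walk_def)

lemma lattice_rep_frozen_walk: "lattice_rep frozen_walk = frozen_walk_points"
  by (simp add: frozen_walk_def frozen_walk_points_def lattice_rep_def lattice_from_Cons dstep.simps)

lemma frozen_walk_in_SAW1: "frozen_walk \<in> SAW1 227"
proof -
  have "distinct frozen_walk_points"
    by (simp add: frozen_walk_points_def)
  then show ?thesis
    using length_frozen_walk set_frozen_walk
    by (simp add: SAW1_def conformations_def lattice_rep_frozen_walk)
qed

lemma pivot_collisions_frozen_walk:
  "pivot_collisions frozen_walk_points 1 2 frozen_walk_collisions_cw"
  "pivot_collisions frozen_walk_points 3 2 frozen_walk_collisions_ccw"
  by (simp_all add: frozen_walk_points_def frozen_walk_collisions_cw_def frozen_walk_collisions_ccw_def
      pivot_collision_def rot_about_def)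

lemma frozen_frozen_walk: "frozen 227 frozen_walk"
  unfolding frozen_def
proof (intro allI impI)
  fix k :: int assume k: "2 \<le> \<bar>k\<bar> \<and> \<bar>k\<bar> \<le> int 227"
  define t where "t = nat \<bar>k\<bar> - 2"
  have t: "t < 226" "2 + t = nat \<bar>k\<bar>"
    using k by (auto simp: t_def)
  have "length frozen_walk_collisions_cw = 226" "length frozen_walk_collisions_ccw = 226"
    by (simp_all add: frozen_walk_collisions_cw_def frozen_walk_collisions_ccw_def)
  then have "\<exists>i j. pivot_collision frozen_walk_points (2 + t) (pivot_turns k) i j"
    using pivot_collisions_nth[OF pivot_collisions_frozen_walk(1), of t]
      pivot_collisions_nth[OF pivot_collisions_frozen_walk(2), of t] t(1)
    by (simp add: pivot_turns_def)
  then obtain i j where "pivot_collision frozen_walk_points (nat \<bar>k\<bar>) (pivot_turns k) i j"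
    unfolding t(2) by blast
  moreover have "k \<noteq> 0" "nat \<bar>k\<bar> \<le> length frozen_walk"
    using k by (auto simp: length_frozen_walk)
  ultimately show "\<not> distinct (lattice_rep (pivot k frozen_walk))"
    using pivot_collision_not_distinct[OF _ _ set_frozen_walk] by (simp add: lattice_rep_frozen_walk)
qed

lemma frozen_walk_not_straight: "rotate_conf m frozen_walk \<noteq> replicate 227 0"
proof
  assume straight: "rotate_conf m frozen_walk = replicate 227 0"
  have "frozen_walk ! 0 = 0" "frozen_walk ! 1 = 3"
    by (simp_all add: frozen_walk_def)
  moreover have "rotate_conf m frozen_walk ! 0 = 0" "rotate_conf m frozen_walk ! 1 = 0"
    using straight by simp_all
  ultimately have "m mod 4 = 0" "(3 + m) mod 4 = 0"
    using length_frozen_walk by (simp_all add: rotate_conf_def turn_def)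
  then show False
    by presburger
qed

theorem mainTheorem2:
  shows "\<exists>N::nat. N \<ge> 1 \<and> SAW2 N \<noteq> SAW3 N"
proof -
  have "frozen_walk \<in> SAW2 227"
    using frozen_walk_in_SAW1 by (simp add: SAW2_eq_SAW1)
  moreover have "frozen_walk \<notin> SAW3 227"
    using frozen_not_in_SAW3[OF frozen_frozen_walk set_frozen_walk] frozen_walk_not_straight by blast
  ultimately show ?thesis
    by (intro exI[of _ 227]) auto
qed

end
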